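(* Let $\mathcal F$ be a finite family of nonempty subsets of $[r]$. Then $\Delta_{\mathcal F}$ equals the set of all $x\in\mathbb R^r$ with $x_i\ge0$ for all $i$, $x_1+\dots+x_r=|\mathcal F|$, and $$\sum_{i\in G}x_i\;\ge\;\bigl|\{F\in\mathcal F: F\subseteq G\}\bigr|\qquad\text{for all } G\subseteq[r].$$ Moreover, it suffices to impose these inequalities for the sets $G$ belonging to the building closure $\widehat{\mathcal F}$ of $\mathcal F$.
   Context: For $F\subseteq[r]$ nonempty, $\Delta_F=\{x\in\mathbb R^r_{\ge0}: \sum_i x_i=1,\ x_i=0 \text{ for } i\notin F\}=\operatorname{conv}\{e_i:i\in F\}$. For a family $\mathcal F$ of nonempty subsets of $[r]$, $\Delta_{\mathcal F}=\sum_{F\in\mathcal F}\Delta_F$ (Minkowski sum). The building closure $\widehat{\mathcal F}$ is the smallest family of subsets of $[r]$ containing $\mathcal F$ and all singletons such that $F\cup F'\in\widehat{\mathcal F}$ whenever $F,F'\in\widehat{\mathcal F}$ and $F\cap F'\ne\emptyset$. *)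

theory Defs
  imports "HOL-Analysis.Analysis" "HOL-Library.Set_Algebras"
begin

text \<open>Coordinates of R^r are indexed by the finite type 'n (playing the role of [r]).
  The simplex Delta_F of a nonempty F, a subset of [r].\<close>
definition simplex_face :: "'n::finite set \<Rightarrow> (real^'n) set" where
  "simplex_face F = {x. (\<forall>i. x $ i \<ge> 0) \<and> (\<Sum>i\<in>UNIV. x $ i) = 1 \<and> (\<forall>i. i \<notin> F \<longrightarrow> x $ i = 0)}"

text \<open>Minkowski sum Delta_{\<F>} of the simplices (sum of sets via Set_Algebras; empty family gives {0}).\<close>
definition family_polytope :: "'n::finite set set \<Rightarrow> (real^'n) set" where
  "family_polytope \<F> = (\<Sum>F\<in>\<F>. simplex_face F)"

inductive_set building_closure :: "'n set set \<Rightarrow> 'n set set" for \<F> where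
  base: "F \<in> \<F> \<Longrightarrow> F \<in> building_closure \<F>"
| singleton: "{i} \<in> building_closure \<F>"
| union: "F \<in> building_closure \<F> \<Longrightarrow> F' \<in> building_closure \<F> \<Longrightarrow> F \<inter> F' \<noteq> {}
          \<Longrightarrow> F \<union> F' \<in> building_closure \<F>"

end

theory Submission
  imports Defs
begin

text \<open>
  Necessity: a point of \<open>\<Delta>\<^sub>F\<close> has all its mass inside every \<open>G \<supseteq> F\<close>; summing over \<open>\<F>\<close>,
  the mass of \<open>x\<close> in \<open>G\<close> is at least the number of \<open>F \<subseteq> G\<close>.

  Sufficiency: separate a point \<open>x\<close> outside the compact convex Minkowski sum by a linear
  functional \<open>w\<close>. On the Minkowski sum, \<open>w\<close> attains \<open>\<Sum>\<^sub>F min\<^sub>F w\<close> at a sum of vertices, while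
  the inequalities force \<open>\<Sum>\<^sub>i w\<^sub>i x\<^sub>i \<ge> \<Sum>\<^sub>F min\<^sub>F w\<close>: lowering the largest value \<open>M\<close> of \<open>w\<close> to
  the next one \<open>t\<close> decreases the two sides by \<open>M - t\<close> times the two sides of the inequality
  for \<open>G = {i. w i = M}\<close>, and for constant \<open>w\<close> both sides agree.

  Building closure: the maximal members of the building closure inside \<open>G\<close> are pairwise
  disjoint (the union of two intersecting ones would be larger), cover \<open>G\<close> (singletons), and
  every \<open>F \<subseteq> G\<close> lies in one of them; summing their inequalities gives the one for \<open>G\<close>.
\<close>

lemma closed_simplex_face: "closed (simplex_face F)"
  unfolding simplex_face_def
  by (intro closed_Collect_conj closed_Collect_all closed_Collect_imp closed_Collect_le
      closed_Collect_eq open_Collect_const continuous_intros)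

lemma simplex_face_subset_cbox: "simplex_face F \<subseteq> cbox 0 1"
proof
  fix x assume x: "x \<in> simplex_face F"
  have "x $ i \<le> (\<Sum>j\<in>UNIV. x $ j)" for i
    using x by (intro member_le_sum) (auto simp: simplex_face_def)
  with x show "x \<in> cbox 0 1"
    by (auto simp: mem_box_cart simplex_face_def)
qed

lemma compact_simplex_face: "compact (simplex_face F)"
  using closed_simplex_face[of F] bounded_subset[OF bounded_cbox simplex_face_subset_cbox[of F]]
  by (simp add: compact_eq_bounded_closed)

lemma convex_simplex_face: "convex (simplex_face F)"
  unfolding simplex_face_def convex_def
  by (auto simp: sum.distrib simp flip: sum_distrib_left)

lemma compact_set_sum:
  fixes B :: "'i \<Rightarrow> 'a::real_normed_vector set"
  assumes "\<And>i. i \<in> A \<Longrightarrow> compact (B i)"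
  shows "compact (\<Sum>i\<in>A. B i)"
  using assms
proof (induction A rule: infinite_finite_induct)
  case (insert a A)
  have "(\<Sum>i\<in>insert a A. B i) = {x + y | x y. x \<in> B a \<and> y \<in> (\<Sum>i\<in>A. B i)}"
    using insert.hyps by (auto simp: set_plus_def)
  then show ?case
    using insert compact_sums[of "B a" "\<Sum>i\<in>A. B i"] by simp
qed auto

lemma compact_family_polytope: "compact (family_polytope \<F>)"
  unfolding family_polytope_def by (intro compact_set_sum compact_simplex_face)

lemma convex_family_polytope: "convex (family_polytope \<F>)"
  unfolding family_polytope_def by (intro convex_set_sum convex_simplex_face)

lemma mem_family_polytope:
  "x \<in> family_polytope \<F> \<longleftrightarrow> (\<exists>s. (\<forall>F\<in>\<F>. s F \<in> simplex_face F) \<and> x = (\<Sum>F\<in>\<F>. s F))"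
  by (auto simp: family_polytope_def set_sum_alt)

definition inequality_polytope :: "'n::finite set set \<Rightarrow> 'n set set \<Rightarrow> (real^'n) set" where
  "inequality_polytope \<F> \<G> =
     {x. (\<forall>i. x $ i \<ge> 0) \<and> (\<Sum>i\<in>UNIV. x $ i) = real (card \<F>) \<and>
         (\<forall>G\<in>\<G>. (\<Sum>i\<in>G. x $ i) \<ge> real (card {F\<in>\<F>. F \<subseteq> G}))}"

lemma of_bool_subset_le_sum_simplex_face:
  assumes "y \<in> simplex_face F"
  shows "of_bool (F \<subseteq> G) \<le> (\<Sum>i\<in>G. y $ i)"
proof (cases "F \<subseteq> G")
  case True
  have "(\<Sum>i\<in>G. y $ i) = (\<Sum>i\<in>UNIV. y $ i)"
    using assms True by (intro sum.mono_neutral_left) (auto simp: simplex_face_def)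
  with assms True show ?thesis by (simp add: simplex_face_def)
next
  case False
  with assms show ?thesis by (auto simp: simplex_face_def intro: sum_nonneg)
qed

lemma family_polytope_subset_inequality_polytope:
  "family_polytope \<F> \<subseteq> inequality_polytope \<F> UNIV"
proof
  fix x assume "x \<in> family_polytope \<F>"
  then obtain s where s: "\<forall>F\<in>\<F>. s F \<in> simplex_face F" and x: "x = (\<Sum>F\<in>\<F>. s F)"
    by (auto simp: mem_family_polytope)
  have "x $ i \<ge> 0" for i
    using s by (auto simp: x sum_component simplex_face_def intro: sum_nonneg)
  moreover have "(\<Sum>i\<in>UNIV. x $ i) = real (card \<F>)"
    using s by (simp add: x sum_component simplex_face_def sum.swap[where B = \<F>])
  moreover have "(\<Sum>i\<in>G. x $ i) \<ge> real (card {F\<in>\<F>. F \<subseteq> G})" for G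
  proof -
    have "real (card {F\<in>\<F>. F \<subseteq> G}) = (\<Sum>F\<in>\<F>. of_bool (F \<subseteq> G))"
      by (simp add: Int_def)
    also have "\<dots> \<le> (\<Sum>F\<in>\<F>. \<Sum>i\<in>G. s F $ i)"
      using s by (intro sum_mono of_bool_subset_le_sum_simplex_face) auto
    also have "\<dots> = (\<Sum>i\<in>G. x $ i)"
      by (simp add: x sum_component sum.swap[of _ G])
    finally show ?thesis .
  qed
  ultimately show "x \<in> inequality_polytope \<F> UNIV"
    by (simp add: inequality_polytope_def)
qed

lemma building_closure_components:
  fixes G :: "'n::finite set"
  obtains \<M> where "\<M> \<subseteq> building_closure \<F>" and "\<Union>\<M> = G" and "pairwise disjnt \<M>"
    and "\<And>H. H \<in> building_closure \<F> \<Longrightarrow> H \<subseteq> G \<Longrightarrow> \<exists>B\<in>\<M>. H \<subseteq> B"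
proof
  define \<C> where "\<C> = {H \<in> building_closure \<F>. H \<subseteq> G}"
  define \<M> where "\<M> = {B\<in>\<C>. \<forall>H\<in>\<C>. B \<subseteq> H \<longrightarrow> B = H}"
  show below_maximal: "\<exists>B\<in>\<M>. H \<subseteq> B" if "H \<in> building_closure \<F>" "H \<subseteq> G" for H
    using finite_has_maximal2[of \<C> H] that by (auto simp: \<C>_def \<M>_def)
  show "\<M> \<subseteq> building_closure \<F>"
    by (auto simp: \<M>_def \<C>_def)
  show "\<Union>\<M> = G"
  proof
    show "\<Union>\<M> \<subseteq> G"
      by (auto simp: \<M>_def \<C>_def)
    show "G \<subseteq> \<Union>\<M>"
    proof
      fix i assume "i \<in> G"
      then show "i \<in> \<Union>\<M>"
        using below_maximal[OF building_closure.singleton, of i] by blast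
    qed
  qed
  show "pairwise disjnt \<M>"
  proof (rule pairwiseI)
    fix A B assume A: "A \<in> \<M>" and B: "B \<in> \<M>" and "A \<noteq> B"
    show "disjnt A B"
    proof (rule ccontr)
      assume "\<not> disjnt A B"
      with A B have union: "A \<union> B \<in> \<C>"
        by (auto simp: \<M>_def \<C>_def disjnt_def intro: building_closure.union)
      have "A = A \<union> B" "B = A \<union> B"
        using A B union unfolding \<M>_def by (simp_all add: Un_upper1 Un_upper2)
      with \<open>A \<noteq> B\<close> show False
        by blast
    qed
  qed
qed

lemma inequality_polytope_building_closure:
  "inequality_polytope \<F> (building_closure \<F>) = inequality_polytope \<F> UNIV"
proof
  show "inequality_polytope \<F> UNIV \<subseteq> inequality_polytope \<F> (building_closure \<F>)"
    by (auto simp: inequality_polytope_def)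
next
  show "inequality_polytope \<F> (building_closure \<F>) \<subseteq> inequality_polytope \<F> UNIV"
  proof
    fix x assume x: "x \<in> inequality_polytope \<F> (building_closure \<F>)"
    have "(\<Sum>i\<in>G. x $ i) \<ge> real (card {F\<in>\<F>. F \<subseteq> G})" for G
    proof -
      obtain \<M> where \<M>: "\<M> \<subseteq> building_closure \<F>" "\<Union>\<M> = G" "pairwise disjnt \<M>"
        and below: "\<And>H. H \<in> building_closure \<F> \<Longrightarrow> H \<subseteq> G \<Longrightarrow> \<exists>B\<in>\<M>. H \<subseteq> B"
        using building_closure_components[where \<F> = \<F> and G = G] by blast
      have "{F\<in>\<F>. F \<subseteq> G} \<subseteq> (\<Union>B\<in>\<M>. {F\<in>\<F>. F \<subseteq> B})"
        using below[OF building_closure.base] by blast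
      then have "card {F\<in>\<F>. F \<subseteq> G} \<le> card (\<Union>B\<in>\<M>. {F\<in>\<F>. F \<subseteq> B})"
        by (simp add: card_mono)
      also have "\<dots> \<le> (\<Sum>B\<in>\<M>. card {F\<in>\<F>. F \<subseteq> B})"
        by (simp add: card_UN_le)
      finally have "real (card {F\<in>\<F>. F \<subseteq> G}) \<le> (\<Sum>B\<in>\<M>. real (card {F\<in>\<F>. F \<subseteq> B}))"
        by (simp only: of_nat_sum[symmetric] of_nat_le_iff)
      also have "\<dots> \<le> (\<Sum>B\<in>\<M>. \<Sum>i\<in>B. x $ i)"
        using x \<M>(1) by (intro sum_mono) (auto simp: inequality_polytope_def)
      also have "\<dots> = (\<Sum>i\<in>\<Union>\<M>. x $ i)"
        using \<M>(3) by (simp add: sum.Union_disjoint pairwise_def disjnt_def)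
      finally show ?thesis
        by (simp only: \<M>(2))
    qed
    with x show "x \<in> inequality_polytope \<F> UNIV"
      by (simp add: inequality_polytope_def)
  qed
qed

lemma Min_image_min_top_level:
  fixes w :: "'a \<Rightarrow> 'b::linordered_ab_group_add"
  assumes "finite F" "F \<noteq> {}" and "t \<le> M" and levels: "\<forall>i. w i \<le> t \<or> w i = M"
  shows "Min (w ` F) = Min ((\<lambda>i. min (w i) t) ` F) + (if F \<subseteq> {i. w i = M} then M - t else 0)"
proof -
  have "mono (\<lambda>v. min v t)"
    by (simp add: mono_def min.coboundedI1)
  then have Min_min: "Min ((\<lambda>i. min (w i) t) ` F) = min (Min (w ` F)) t"
    using mono_Min_commute[of "\<lambda>v. min v t" "w ` F"] assms(1,2) by (simp add: image_image)
  show ?thesis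
  proof (cases "F \<subseteq> {i. w i = M}")
    case True
    with assms(2) have "w ` F = {M}" by auto
    with True \<open>t \<le> M\<close> show ?thesis by (simp add: Min_min)
  next
    case False
    then obtain i where "i \<in> F" "w i \<le> t" using levels by auto
    with assms(1) have "Min (w ` F) \<le> t" by (meson Min_le finite_imageI imageI order_trans)
    with False show ?thesis by (simp add: Min_min)
  qed
qed

lemma weighted_sum_min_top_level:
  fixes w x :: "'n::finite \<Rightarrow> 'b::linordered_idom"
  assumes "t \<le> M" and levels: "\<forall>i. w i \<le> t \<or> w i = M"
  shows "(\<Sum>i\<in>UNIV. w i * x i) = (\<Sum>i\<in>UNIV. min (w i) t * x i) + (\<Sum>i\<in>{i. w i = M}. x i) * (M - t)"
proof -
  have "(\<Sum>i\<in>UNIV. w i * x i) = (\<Sum>i\<in>UNIV. min (w i) t * x i + (if w i = M then x i * (M - t) else 0))"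
    using assms by (intro sum.cong) (auto simp: min_def algebra_simps)
  then show ?thesis
    by (simp add: sum.distrib sum.If_cases sum_distrib_right)
qed

lemma top_two_values:
  fixes w :: "'a \<Rightarrow> 'b::linorder"
  assumes "finite (range w)" and "\<nexists>c. range w = {c}"
  obtains M t where "t < M" and "\<forall>i. w i \<le> t \<or> w i = M"
    and "card (range (\<lambda>i. min (w i) t)) < card (range w)"
proof
  define M where "M = Max (range w)"
  define t where "t = Max (range w - {M})"
  have M: "M \<in> range w"
    unfolding M_def using assms(1) by (intro Max_in) auto
  with assms(2) have "range w - {M} \<noteq> {}" by auto
  with assms(1) have t: "t \<in> range w - {M}"
    unfolding t_def by (intro Max_in) auto
  with assms(1) show "t < M"
    unfolding M_def by (auto intro: Max_ge simp: order.strict_iff_order)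
  show levels: "\<forall>i. w i \<le> t \<or> w i = M"
    unfolding t_def using assms(1) by (auto intro: Max_ge)
  have "range (\<lambda>i. min (w i) t) \<subseteq> range w - {M}"
    using t levels \<open>t < M\<close> by (auto simp: min_def)
  with M assms(1) show "card (range (\<lambda>i. min (w i) t)) < card (range w)"
    by (intro psubset_card_mono) auto
qed

lemma sum_Min_le_weighted_sum:
  fixes w x :: "'n::finite \<Rightarrow> real"
  assumes nonempty: "\<forall>F\<in>\<F>. F \<noteq> {}"
    and total: "(\<Sum>i\<in>UNIV. x i) = real (card \<F>)"
    and lower: "\<forall>G. real (card {F\<in>\<F>. F \<subseteq> G}) \<le> (\<Sum>i\<in>G. x i)"
  shows "(\<Sum>F\<in>\<F>. Min (w ` F)) \<le> (\<Sum>i\<in>UNIV. w i * x i)"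
proof (induction "card (range w)" arbitrary: w rule: less_induct)
  case less
  show ?case
  proof (cases "\<exists>c. range w = {c}")
    case True
    then obtain c where w: "\<And>i. w i = c" by auto
    have "(\<Sum>F\<in>\<F>. Min (w ` F)) = (\<Sum>F\<in>\<F>. c)"
      using nonempty by (intro sum.cong) (auto simp: w image_constant_conv)
    also have "\<dots> = (\<Sum>i\<in>UNIV. w i * x i)"
      by (simp add: w total flip: sum_distrib_left)
    finally show ?thesis by simp
  next
    case False
    have "finite (range w)" by simp
    then obtain M t where "t < M" and levels: "\<forall>i. w i \<le> t \<or> w i = M"
      and "card (range (\<lambda>i. min (w i) t)) < card (range w)"
      using False by (rule top_two_values)
    define w' where "w' i = min (w i) t" for i
    have IH: "(\<Sum>F\<in>\<F>. Min (w' ` F)) \<le> (\<Sum>i\<in>UNIV. w' i * x i)"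
      using \<open>card (range (\<lambda>i. min (w i) t)) < card (range w)\<close> unfolding w'_def by (rule less)
    have "(\<Sum>F\<in>\<F>. Min (w ` F))
        = (\<Sum>F\<in>\<F>. Min (w' ` F)) + real (card {F\<in>\<F>. F \<subseteq> {i. w i = M}}) * (M - t)"
      using nonempty \<open>t < M\<close> levels
      by (simp add: Min_image_min_top_level[of _ t M w] w'_def sum.distrib sum.If_cases Int_def)
    also have "\<dots> \<le> (\<Sum>i\<in>UNIV. w' i * x i) + (\<Sum>i\<in>{i. w i = M}. x i) * (M - t)"
      using IH lower \<open>t < M\<close> by (intro add_mono mult_right_mono) auto
    also have "\<dots> = (\<Sum>i\<in>UNIV. w i * x i)"
      using weighted_sum_min_top_level[of t M w x] \<open>t < M\<close> levels by (simp add: w'_def)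
    finally show ?thesis .
  qed
qed

lemma axis_in_simplex_face: "i \<in> F \<Longrightarrow> axis i 1 \<in> simplex_face F"
  by (auto simp: simplex_face_def axis_def)

lemma family_polytope_attains_sum_Min:
  assumes "\<forall>F\<in>\<F>. F \<noteq> {}"
  obtains p where "p \<in> family_polytope \<F>" and "inner a p = (\<Sum>F\<in>\<F>. Min ((($) a) ` F))"
proof -
  have minimizer: "\<forall>F\<in>\<F>. \<exists>i. i \<in> F \<and> a $ i = Min ((($) a) ` F)"
  proof
    fix F assume "F \<in> \<F>"
    with assms have "Min ((($) a) ` F) \<in> (($) a) ` F"
      by (intro Min_in) auto
    then show "\<exists>i. i \<in> F \<and> a $ i = Min ((($) a) ` F)"
      by auto
  qed
  obtain g where g: "\<forall>F\<in>\<F>. g F \<in> F \<and> a $ g F = Min ((($) a) ` F)"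
    using bchoice[OF minimizer] by blast
  show thesis
  proof
    show "(\<Sum>F\<in>\<F>. axis (g F) 1) \<in> family_polytope \<F>"
      unfolding mem_family_polytope using g
      by (intro exI[of _ "\<lambda>F. axis (g F) 1"]) (simp add: axis_in_simplex_face)
    show "inner a (\<Sum>F\<in>\<F>. axis (g F) 1) = (\<Sum>F\<in>\<F>. Min ((($) a) ` F))"
      using g by (simp add: inner_sum_right inner_axis)
  qed
qed

lemma inequality_polytope_subset_family_polytope:
  assumes "\<forall>F\<in>\<F>. F \<noteq> {}"
  shows "inequality_polytope \<F> UNIV \<subseteq> family_polytope \<F>"
proof
  fix x assume x: "x \<in> inequality_polytope \<F> UNIV"
  show "x \<in> family_polytope \<F>"
  proof (rule ccontr)
    assume "x \<notin> family_polytope \<F>"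
    then obtain a b where "inner a x < b" and separated: "\<forall>p\<in>family_polytope \<F>. b < inner a p"
      using separating_hyperplane_closed_point[OF convex_family_polytope
          compact_imp_closed[OF compact_family_polytope]] by blast
    obtain p where "p \<in> family_polytope \<F>" and p: "inner a p = (\<Sum>F\<in>\<F>. Min ((($) a) ` F))"
      using family_polytope_attains_sum_Min[OF assms] by blast
    have "(\<Sum>F\<in>\<F>. Min ((($) a) ` F)) \<le> (\<Sum>i\<in>UNIV. a $ i * x $ i)"
      using x by (intro sum_Min_le_weighted_sum[OF assms]) (auto simp: inequality_polytope_def)
    with p have "inner a p \<le> inner a x"
      by (simp add: inner_vec_def)
    with \<open>inner a x < b\<close> separated \<open>p \<in> family_polytope \<F>\<close> show False
      by fastforce
  qed
qed

theorem proposition3p12: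
  fixes \<F> :: "'n::finite set set"
  assumes "finite \<F>"
    and "\<forall>F\<in>\<F>. F \<noteq> {}"
  shows "(family_polytope \<F> =
           {x. (\<forall>i. x $ i \<ge> 0) \<and> (\<Sum>i\<in>UNIV. x $ i) = real (card \<F>) \<and>
               (\<forall>G. (\<Sum>i\<in>G. x $ i) \<ge> real (card {F\<in>\<F>. F \<subseteq> G}))}) \<and>
         (family_polytope \<F> =
           {x. (\<forall>i. x $ i \<ge> 0) \<and> (\<Sum>i\<in>UNIV. x $ i) = real (card \<F>) \<and>
               (\<forall>G\<in>building_closure \<F>. (\<Sum>i\<in>G. x $ i) \<ge> real (card {F\<in>\<F>. F \<subseteq> G}))})"
proof -
  have "family_polytope \<F> = inequality_polytope \<F> UNIV"
    using family_polytope_subset_inequality_polytope inequality_polytope_subset_family_polytope[OF assms(2)]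
    by (rule antisym)
  moreover have "inequality_polytope \<F> (building_closure \<F>) = inequality_polytope \<F> UNIV"
    by (rule inequality_polytope_building_closure)
  ultimately show ?thesis
    by (simp add: inequality_polytope_def)
qed

end
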